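(* None of the semantics $\mathit{na}$, $\mathit{stg}$, $\mathit{cf2}$, $\mathit{tfcf2}$, $\mathit{cf1.5}$, $\mathit{stg2}$, $\mathit{tfstg2}$, $\mathit{stg1.5}$ satisfies the reinstatement criterion.
   Context: An argumentation framework (AF) is $\mathcal{F}=(A_{\mathcal{F}},R_{\mathcal{F}})$ with $R_{\mathcal{F}}\subseteq A_{\mathcal{F}}\times A_{\mathcal{F}}$; $a\rightarrow b$ means $(a,b)\in R_{\mathcal{F}}$. $S$ defends $a$ if every attacker of $a$ is attacked by some element of $S$. A semantics $\sigma$ (assigning a set $\sigma(\mathcal{F})$ of subsets of $A_{\mathcal{F}}$ to each AF) satisfies the reinstatement criterion if for every AF $\mathcal{F}$ and every $S\in\sigma(\mathcal{F})$, whenever $S$ defends an argument $a$, then $a\in S$. $\mathcal{F}|_B=(A_{\mathcal{F}}\cap B,R_{\mathcal{F}}\cap(B\times B))$. Conflict-free: no $a,b\in S$ with $a\rightarrow b$. $\mathit{na}$: $\subseteq$-maximal conflict-free sets. $S^\oplus=S\cup\{x:\exists y\in S,\ y\rightarrow x\}$; $\mathit{stg}$: conflict-free $S$ with no conflict-free $T$ such that $S^\oplus\subsetneq T^\oplus$. $\mathrm{SCC}$: strongly connected components of the attack graph. $D_S(X)=\{b\in X:\exists a\in S\setminus X,\ a\rightarrow b\}$. $\mathit{cf2}$: $S\in\mathit{cf2}(\mathcal{F})$ iff either $|\mathrm{SCC}(\mathcal{F})|=1$ and $S$ is naive in $\mathcal{F}$, or $|\mathrm{SCC}(\mathcal{F})|\ne1$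 and for each $X\in\mathrm{SCC}(\mathcal{F})$, $S\cap X\in\mathit{cf2}(\mathcal{F}|_{X\setminus D_S(X)})$, recursively (membership requires the recursion to be well-founded). $\mathit{stg2}$: same with stage. $\mathit{tfcf2}$/$\mathit{tfstg2}$: $C^0_S(a)=\mathrm{SCC}(a)$; $C^{\alpha+1}_S(a)$ = component of $a$ in $\mathcal{F}|_{C^\alpha_S(a)\setminus D_S(C^\alpha_S(a))}$; at limits $\lambda$, component of $a$ in $\mathcal{F}|_{\bigcap_{\alpha<\lambda}C^\alpha_S(a)}$; $\alpha_S(a)$ = least $\alpha$ with $a\notin C^\alpha_S(a)$ or $C^{\alpha+1}_S(a)=C^\alpha_S(a)$; $S$ is a member iff conflict-free and for each $a$, $a\notin C^{\alpha_S(a)}_S(a)$ or $S\cap C^{\alpha_S(a)}_S(a)$ is naive (resp. stage) in $\mathcal{F}|_{C^{\alpha_S(a)}_S(a)}$. $\mathit{cf1.5}$/$\mathit{stg1.5}$: $S$ conflict-free and for each $X\in\mathrm{SCC}(\mathcal{F})$, $S\cap X$ is naive (resp. stage) in $\mathcal{F}|_{X\setminus D_S(X)}$. *)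

theory Defs
  imports Main
begin

type_synonym 'a AF = "'a set \<times> ('a \<times> 'a) set"

definition args :: "'a AF \<Rightarrow> 'a set" where "args F = fst F"
definition atts :: "'a AF \<Rightarrow> ('a \<times> 'a) set" where "atts F = snd F"

definition wf_AF :: "'a AF \<Rightarrow> bool" where
  "wf_AF F \<longleftrightarrow> atts F \<subseteq> args F \<times> args F"

definition restrict :: "'a AF \<Rightarrow> 'a set \<Rightarrow> 'a AF" where
  "restrict F B = (args F \<inter> B, atts F \<inter> (B \<times> B))"

definition defends :: "'a AF \<Rightarrow> 'a set \<Rightarrow> 'a \<Rightarrow> bool" where
  "defends F S a \<longleftrightarrow> (\<forall>b. (b, a) \<in> atts F \<longrightarrow> (\<exists>c\<in>S. (c, b) \<in> atts F))"

definition conflict_free :: "'a AF \<Rightarrow> 'a set \<Rightarrow> bool" where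
  "conflict_free F S \<longleftrightarrow> S \<subseteq> args F \<and> (\<forall>a\<in>S. \<forall>b\<in>S. (a, b) \<notin> atts F)"

definition naive :: "'a AF \<Rightarrow> 'a set \<Rightarrow> bool" where
  "naive F S \<longleftrightarrow> conflict_free F S \<and>
     (\<forall>T. conflict_free F T \<and> S \<subseteq> T \<longrightarrow> T = S)"

definition range_plus :: "'a AF \<Rightarrow> 'a set \<Rightarrow> 'a set" where
  "range_plus F S = S \<union> {x. \<exists>y\<in>S. (y, x) \<in> atts F}"

definition stage :: "'a AF \<Rightarrow> 'a set \<Rightarrow> bool" where
  "stage F S \<longleftrightarrow> conflict_free F S \<and>
     \<not> (\<exists>T. conflict_free F T \<and> range_plus F S \<subset> range_plus F T)"

definition same_scc :: "'a AF \<Rightarrow> 'a \<Rightarrow> 'a \<Rightarrow> bool" where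
  "same_scc F a b \<longleftrightarrow> a \<in> args F \<and> b \<in> args F \<and>
     (a, b) \<in> (atts F)\<^sup>* \<and> (b, a) \<in> (atts F)\<^sup>*"

definition scc_of :: "'a AF \<Rightarrow> 'a \<Rightarrow> 'a set" where
  "scc_of F a = {b. same_scc F a b}"

definition SCCs :: "'a AF \<Rightarrow> 'a set set" where
  "SCCs F = {scc_of F a | a. a \<in> args F}"

definition D :: "'a AF \<Rightarrow> 'a set \<Rightarrow> 'a set \<Rightarrow> 'a set" where
  "D F S X = {b \<in> X. \<exists>a \<in> S - X. (a, b) \<in> atts F}"

text \<open>SCC-recursive schema (cf2 with base naive, stg2 with base stage).
  Defined inductively: membership requires a well-founded recursion.\<close>
inductive scc_rec :: "('a AF \<Rightarrow> 'a set \<Rightarrow> bool) \<Rightarrow> 'a AF \<Rightarrow> 'a set \<Rightarrow> bool"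
  for base :: "'a AF \<Rightarrow> 'a set \<Rightarrow> bool" where
  single: "(\<exists>X. SCCs F = {X}) \<Longrightarrow> base F S \<Longrightarrow> scc_rec base F S"
| multi: "\<not> (\<exists>X. SCCs F = {X}) \<Longrightarrow> S \<subseteq> args F \<Longrightarrow>
          (\<forall>X\<in>SCCs F. scc_rec base (restrict F (X - D F S X)) (S \<inter> X)) \<Longrightarrow>
          scc_rec base F S"

definition cf2 :: "'a AF \<Rightarrow> 'a set \<Rightarrow> bool" where "cf2 = scc_rec naive"
definition stg2 :: "'a AF \<Rightarrow> 'a set \<Rightarrow> bool" where "stg2 = scc_rec stage"

definition one_half :: "('a AF \<Rightarrow> 'a set \<Rightarrow> bool) \<Rightarrow> 'a AF \<Rightarrow> 'a set \<Rightarrow> bool" where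
  "one_half base F S \<longleftrightarrow> conflict_free F S \<and>
     (\<forall>X\<in>SCCs F. base (restrict F (X - D F S X)) (S \<inter> X))"

definition cf15 :: "'a AF \<Rightarrow> 'a set \<Rightarrow> bool" where "cf15 = one_half naive"
definition stg15 :: "'a AF \<Rightarrow> 'a set \<Rightarrow> bool" where "stg15 = one_half stage"

text \<open>Transfinite variants. comp F a X is the component of a in F restricted to X
  (empty if a is not in X). The stages of a (w.r.t. S) are the values C^alpha_S(a)
  of the transfinite sequence; they are generated by: the SCC of a, the successor step,
  and the limit step (component of a in the intersection of a nonempty set of stages).\<close>
definition comp :: "'a AF \<Rightarrow> 'a \<Rightarrow> 'a set \<Rightarrow> 'a set" where
  "comp F a X = scc_of (restrict F X) a"

definition tf_step :: "'a AF \<Rightarrow> 'a set \<Rightarrow> 'a \<Rightarrow> 'a set \<Rightarrow> 'a set" where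
  "tf_step F S a X = comp F a (X - D F S X)"

inductive_set tf_stages :: "'a AF \<Rightarrow> 'a set \<Rightarrow> 'a \<Rightarrow> 'a set set"
  for F :: "'a AF" and S :: "'a set" and a :: 'a where
  zero: "scc_of F a \<in> tf_stages F S a"
| succ: "X \<in> tf_stages F S a \<Longrightarrow> tf_step F S a X \<in> tf_stages F S a"
| lim: "K \<noteq> {} \<Longrightarrow> (\<forall>X\<in>K. X \<in> tf_stages F S a) \<Longrightarrow> comp F a (\<Inter>K) \<in> tf_stages F S a"

text \<open>S is a member iff conflict-free and, for every argument a, if a survives until the
  stage C^{alpha_S(a)} where the sequence stabilises, then S restricted there is base-extension.
  (A stage X with a in X and tf_step X = X is exactly C^{alpha_S(a)} with a in it.)\<close>
definition tf :: "('a AF \<Rightarrow> 'a set \<Rightarrow> bool) \<Rightarrow> 'a AF \<Rightarrow> 'a set \<Rightarrow> bool" where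
  "tf base F S \<longleftrightarrow> conflict_free F S \<and>
     (\<forall>a\<in>args F. \<forall>X\<in>tf_stages F S a.
        a \<in> X \<and> tf_step F S a X = X \<longrightarrow> base (restrict F X) (S \<inter> X))"

definition tfcf2 :: "'a AF \<Rightarrow> 'a set \<Rightarrow> bool" where "tfcf2 = tf naive"
definition tfstg2 :: "'a AF \<Rightarrow> 'a set \<Rightarrow> bool" where "tfstg2 = tf stage"

definition reinstatement :: "('a AF \<Rightarrow> 'a set \<Rightarrow> bool) \<Rightarrow> bool" where
  "reinstatement \<sigma> \<longleftrightarrow> (\<forall>F S a. wf_AF F \<longrightarrow> \<sigma> F S \<longrightarrow> a \<in> args F \<longrightarrow>
      defends F S a \<longrightarrow> a \<in> S)"

end

theory Submission
  imports Defs
begin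

text \<open>In the odd cycle 0 \<rightarrow> 1 \<rightarrow> 2 \<rightarrow> 0 the set {0} is both naive and stage, and it defends 2
  (the only attacker 1 of 2 is attacked by 0) without containing it. The cycle is a single
  strongly connected component that receives no attacks from outside, so every SCC-recursive
  variant of naive or stage semantics, finite or transfinite, accepts {0} as well.\<close>

definition strongly_connected :: "'a AF \<Rightarrow> bool" where
  "strongly_connected F \<longleftrightarrow> (\<forall>a\<in>args F. \<forall>b\<in>args F. (a, b) \<in> (atts F)\<^sup>*)"

lemma scc_of_strongly_connected:
  assumes "strongly_connected F" and "a \<in> args F"
  shows "scc_of F a = args F"
  using assms by (auto simp: scc_of_def same_scc_def strongly_connected_def)

lemma SCCs_strongly_connected:
  assumes "strongly_connected F" and "args F \<noteq> {}"
  shows "SCCs F = {args F}"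
proof -
  obtain a where "a \<in> args F" using \<open>args F \<noteq> {}\<close> by blast
  then show ?thesis
    using scc_of_strongly_connected[OF \<open>strongly_connected F\<close>] unfolding SCCs_def by blast
qed

lemma restrict_args:
  assumes "wf_AF F"
  shows "restrict F (args F) = F"
  using assms by (cases F) (auto simp: restrict_def wf_AF_def args_def atts_def)

lemma D_args:
  assumes "S \<subseteq> args F"
  shows "D F S (args F) = {}"
  using assms by (auto simp: D_def)

lemma tf_stages_strongly_connected:
  assumes "X \<in> tf_stages F S a"
    and wf: "wf_AF F" and sc: "strongly_connected F" and "S \<subseteq> args F" and a: "a \<in> args F"
  shows "X = args F"
  using assms(1)
proof induction
  case zero
  show ?case using sc a by (rule scc_of_strongly_connected)
next
  case (succ X)
  then show ?case
    using \<open>S \<subseteq> args F\<close> scc_of_strongly_connected[OF sc a]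
    by (simp add: tf_step_def comp_def D_args restrict_args[OF wf])
next
  case (lim K)
  then have "\<Inter>K = args F" by auto
  then show ?case
    using scc_of_strongly_connected[OF sc a] by (simp add: comp_def restrict_args[OF wf])
qed

lemma scc_rec_strongly_connected:
  assumes "strongly_connected F" and "args F \<noteq> {}" and "base F S"
  shows "scc_rec base F S"
  using assms SCCs_strongly_connected by (blast intro: scc_rec.single)

lemma one_half_strongly_connected:
  assumes "wf_AF F" and "strongly_connected F" and "args F \<noteq> {}"
    and "conflict_free F S" and "base F S"
  shows "one_half base F S"
proof -
  have "S \<subseteq> args F" using \<open>conflict_free F S\<close> by (simp add: conflict_free_def)
  then show ?thesis
    using assms by (simp add: one_half_def SCCs_strongly_connected D_args restrict_args Int_absorb2)
qed

lemma tf_strongly_connected: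
  assumes wf: "wf_AF F" and sc: "strongly_connected F"
    and cf: "conflict_free F S" and "base F S"
  shows "tf base F S"
proof -
  have S: "S \<subseteq> args F" using cf by (simp add: conflict_free_def)
  have "base (restrict F X) (S \<inter> X)" if "a \<in> args F" "X \<in> tf_stages F S a" for a X
    using tf_stages_strongly_connected[OF that(2) wf sc S that(1)] \<open>base F S\<close> S
    by (simp add: restrict_args[OF wf] Int_absorb2)
  then show ?thesis using cf by (simp add: tf_def)
qed

lemma not_reinstatementI:
  assumes "wf_AF F" and "\<sigma> F S" and "a \<in> args F" and "defends F S a" and "a \<notin> S"
  shows "\<not> reinstatement \<sigma>"
  using assms unfolding reinstatement_def by blast

lemma not_reinstatement_scc_variants:
  assumes wf: "wf_AF F" and sc: "strongly_connected F" and a: "a \<in> args F"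
    and cf: "conflict_free F S" and base: "base F S"
    and defends: "defends F S a" and out: "a \<notin> S"
  shows "\<not> reinstatement base" "\<not> reinstatement (scc_rec base)"
    "\<not> reinstatement (one_half base)" "\<not> reinstatement (tf base)"
proof -
  have ne: "args F \<noteq> {}" using a by blast
  have violated: "\<not> reinstatement \<sigma>" if "\<sigma> F S" for \<sigma> :: "'a AF \<Rightarrow> 'a set \<Rightarrow> bool"
    using not_reinstatementI[where \<sigma> = \<sigma>] wf that a defends out by blast
  have "scc_rec base F S" using sc ne base by (rule scc_rec_strongly_connected)
  moreover have "one_half base F S" using wf sc ne cf base by (rule one_half_strongly_connected)
  moreover have "tf base F S" using wf sc cf base by (rule tf_strongly_connected)
  ultimately show "\<not> reinstatement base" "\<not> reinstatement (scc_rec base)"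
    "\<not> reinstatement (one_half base)" "\<not> reinstatement (tf base)"
    using base violated by blast+
qed

definition three_cycle :: "nat AF" where
  "three_cycle = ({0, 1, 2}, {(0, 1), (1, 2), (2, 0)})"

lemma args_three_cycle [simp]: "args three_cycle = {0, 1, 2}"
  and atts_three_cycle [simp]: "atts three_cycle = {(0, 1), (1, 2), (2, 0)}"
  by (simp_all add: three_cycle_def args_def atts_def)

lemma wf_three_cycle: "wf_AF three_cycle"
  by (simp add: wf_AF_def)

lemma strongly_connected_three_cycle: "strongly_connected three_cycle"
proof -
  let ?R = "atts three_cycle"
  have steps: "(0, 1) \<in> ?R\<^sup>*" "(1, 2) \<in> ?R\<^sup>*" "(2, 0) \<in> ?R\<^sup>*"
    by (simp_all add: r_into_rtrancl)
  then have "(0, 2) \<in> ?R\<^sup>*" "(1, 0) \<in> ?R\<^sup>*" "(2, 1) \<in> ?R\<^sup>*"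
    by (meson rtrancl_trans)+
  with steps show ?thesis
    unfolding strongly_connected_def args_three_cycle by (simp only: ball_simps rtrancl_refl)
qed

lemma conflict_free_three_cycle:
  "conflict_free three_cycle T \<longleftrightarrow> T = {} \<or> T = {0} \<or> T = {1} \<or> T = {2}"
proof
  assume "conflict_free three_cycle T"
  then have "T \<in> Pow {0, 1, 2}" and "\<not> {0, 1} \<subseteq> T" "\<not> {1, 2} \<subseteq> T" "\<not> {0, 2} \<subseteq> T"
    unfolding conflict_free_def by auto
  then show "T = {} \<or> T = {0} \<or> T = {1} \<or> T = {2}"
    by (simp add: Pow_insert) blast
next
  assume "T = {} \<or> T = {0} \<or> T = {1} \<or> T = {2}"
  then show "conflict_free three_cycle T"
    by (elim disjE) (simp_all add: conflict_free_def)
qed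

lemma range_plus_three_cycle:
  "range_plus three_cycle {} = {}" "range_plus three_cycle {0} = {0, 1}"
  "range_plus three_cycle {1} = {1, 2}" "range_plus three_cycle {2} = {0, 2}"
  by (auto simp: range_plus_def)

lemma naive_three_cycle: "naive three_cycle {0}"
proof -
  have "T = {0}" if "conflict_free three_cycle T" and "{0} \<subseteq> T" for T
    using that unfolding conflict_free_three_cycle by auto
  then show ?thesis by (simp add: naive_def conflict_free_three_cycle)
qed

lemma stage_three_cycle: "stage three_cycle {0}"
proof -
  have no_superset: "\<not> {0, 1} \<subset> R" if "R \<in> {{}, {0, 1}, {1, 2}, {0, 2 :: nat}}" for R
    using that by (auto simp: psubset_eq)
  have "\<not> range_plus three_cycle {0} \<subset> range_plus three_cycle T"
    if "conflict_free three_cycle T" for T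
  proof -
    from that consider "T = {}" | "T = {0}" | "T = {1}" | "T = {2}"
      unfolding conflict_free_three_cycle by blast
    then have "range_plus three_cycle T \<in> {{}, {0, 1}, {1, 2}, {0, 2}}"
      by cases (simp_all only: range_plus_three_cycle insert_iff simp_thms)
    then show ?thesis unfolding range_plus_three_cycle by (rule no_superset)
  qed
  moreover have "conflict_free three_cycle {0}" by (simp add: conflict_free_three_cycle)
  ultimately show ?thesis unfolding stage_def by blast
qed

lemma defends_three_cycle: "defends three_cycle {0} 2"
  by (simp add: defends_def)

theorem theorem11:
  shows "\<not> reinstatement (naive :: nat AF \<Rightarrow> nat set \<Rightarrow> bool) \<and>
         \<not> reinstatement (stage :: nat AF \<Rightarrow> nat set \<Rightarrow> bool) \<and>
         \<not> reinstatement (cf2 :: nat AF \<Rightarrow> nat set \<Rightarrow> bool) \<and>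
         \<not> reinstatement (tfcf2 :: nat AF \<Rightarrow> nat set \<Rightarrow> bool) \<and>
         \<not> reinstatement (cf15 :: nat AF \<Rightarrow> nat set \<Rightarrow> bool) \<and>
         \<not> reinstatement (stg2 :: nat AF \<Rightarrow> nat set \<Rightarrow> bool) \<and>
         \<not> reinstatement (tfstg2 :: nat AF \<Rightarrow> nat set \<Rightarrow> bool) \<and>
         \<not> reinstatement (stg15 :: nat AF \<Rightarrow> nat set \<Rightarrow> bool)"
proof -
  have cf: "conflict_free three_cycle {0}" by (simp add: conflict_free_three_cycle)
  have "(2::nat) \<in> args three_cycle" "(2::nat) \<notin> {0}" by simp_all
  note counterexample = not_reinstatement_scc_variants[OF wf_three_cycle
      strongly_connected_three_cycle this(1) cf _ defends_three_cycle this(2)]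
  show ?thesis
    unfolding cf2_def stg2_def tfcf2_def tfstg2_def cf15_def stg15_def
    using counterexample[where base = naive, OF naive_three_cycle]
      counterexample[where base = stage, OF stage_three_cycle]
    by blast
qed

end
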